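(* Let $M=M^T\in\mathbb{R}^{3\times3}$ be positive definite, let $m_0$ satisfy $\lambda_{\min}(M)\le m_0\le\lambda_{\max}(M)$, let $\lambda>0$, and let $K_r=K_r^T\in\mathbb{R}^{4\times4}$ be positive definite. For $q=[q_0,\vec q^{\,T}]^T\in\mathcal{S}^3$ and $\dot q\in\mathbb{R}^4$ with $q^T\dot q=0$ set $\omega=2J^T(q)\dot q$, $$D(q)=J(q)MJ^T(q)+m_0qq^T,\qquad C(q,\dot q)=-J(q)(M\omega)^{\wedge}J^T(q)-D(q)Q(\dot q)Q^T(q),$$ and $s(\bar g)=\dot q+\lambda(q_0q-\bar 1)$ for $\bar g=(q,\dot q)$, with $\bar 1=[1,0,0,0]^T$. Consider the Lagrangian system $D(q)\ddot q+C(q,\dot q)\dot q=\bar\tau$ with configuration manifold $\mathcal{S}^3$, in closed loop with $$\bar\tau=-\lambda\Big(D(q)\big(q_0\dot q+\dot q_0q\big)+C(q,\dot q)\big(q_0q-\bar 1\big)\Big)-K_r\,s(\bar g).$$ Then the equilibrium $s(\bar g)=0_{4\times1}$ is globally exponentially stable: there exist constants $k,\gamma>0$ such that every closed-loop solution $q:[t_0,\infty)\to\mathcal{S}^3$ satisfies $\|s(t)\|\le k\,\|s(t_0)\|\,e^{-\gamma(t-t_0)}$ for all $t\ge t_0$.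
   Context: Notation: for $u\in\mathbb{R}^3$, $u^{\wedge}$ is the skew-symmetric matrix with $u^{\wedge}v=u\times v$. For $x=[x_0,\vec x^{\,T}]^T\in\mathbb{R}^4$: $J(x)=\begin{bmatrix}-\vec x^{\,T}\\ x_0I_3+\vec x^{\wedge}\end{bmatrix}\in\mathbb{R}^{4\times3}$ and $Q(x)=\begin{bmatrix}x_0&-\vec x^{\,T}\\ \vec x& x_0I_3+\vec x^{\wedge}\end{bmatrix}$. $\dot q_0$ is the time derivative of the scalar part $q_0$. The Lagrangian system describes rigid-body rotational motion $\dot q=\tfrac12J(q)\omega$, $M\dot\omega=(M\omega)^\wedge\omega+\tau$ with $\bar\tau=\tfrac12J(q)\tau$; $\lambda_{\min}(M),\lambda_{\max}(M)$ are the extreme eigenvalues of $M$. *)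

theory Defs
  imports "HOL-Analysis.Analysis"
begin

text \<open>Vectors in R^4 are indexed 1..4 (component 1 is the scalar part x0);
vectors in R^3 are indexed 1..3. Matrices are lists of rows.\<close>

definition hat :: "real^3 \<Rightarrow> real^3^3" where
  "hat u = vector [vector [0, - u$3, u$2],
                   vector [u$3, 0, - u$1],
                   vector [- u$2, u$1, 0]]"

definition vpart :: "real^4 \<Rightarrow> real^3" where
  "vpart x = vector [x$2, x$3, x$4]"

definition Jm :: "real^4 \<Rightarrow> real^3^4" where
  "Jm x = vector [vector [- x$2, - x$3, - x$4],
                  vector [x$1, - x$4, x$3],
                  vector [x$4, x$1, - x$2],
                  vector [- x$3, x$2, x$1]]"

text \<open>Jm x = [- vpart x ^T ; x0 I3 + hat (vpart x)], written out entrywise.\<close>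

definition Qm :: "real^4 \<Rightarrow> real^4^4" where
  "Qm x = vector [vector [x$1, - x$2, - x$3, - x$4],
                  vector [x$2, x$1, - x$4, x$3],
                  vector [x$3, x$4, x$1, - x$2],
                  vector [x$4, - x$3, x$2, x$1]]"

text \<open>Qm x = [x0, - vpart x ^T ; vpart x, x0 I3 + hat (vpart x)], written out entrywise.\<close>

definition outer :: "real^4 \<Rightarrow> real^4 \<Rightarrow> real^4^4" where
  "outer a b = (\<chi> i j. a$i * b$j)"

definition pos_def_mat :: "real^'n^'n \<Rightarrow> bool" where
  "pos_def_mat A \<longleftrightarrow> transpose A = A \<and> (\<forall>x. x \<noteq> 0 \<longrightarrow> x \<bullet> (A *v x) > 0)"

definition eigvals :: "real^'n^'n \<Rightarrow> real set" where
  "eigvals A = {\<mu>. \<exists>v. v \<noteq> 0 \<and> A *v v = \<mu> *\<^sub>R v}"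

definition lambda_min :: "real^'n^'n \<Rightarrow> real" where
  "lambda_min A = Min (eigvals A)"

definition lambda_max :: "real^'n^'n \<Rightarrow> real" where
  "lambda_max A = Max (eigvals A)"

definition omega :: "real^4 \<Rightarrow> real^4 \<Rightarrow> real^3" where
  "omega q qd = 2 *\<^sub>R (transpose (Jm q) *v qd)"

definition Dm :: "real^3^3 \<Rightarrow> real \<Rightarrow> real^4 \<Rightarrow> real^4^4" where
  "Dm M m0 q = Jm q ** M ** transpose (Jm q) + m0 *\<^sub>R outer q q"

definition Cm :: "real^3^3 \<Rightarrow> real \<Rightarrow> real^4 \<Rightarrow> real^4 \<Rightarrow> real^4^4" where
  "Cm M m0 q qd = - (Jm q ** hat (M *v omega q qd) ** transpose (Jm q))
                  - Dm M m0 q ** Qm qd ** transpose (Qm q)"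

definition one4 :: "real^4" where
  "one4 = vector [1, 0, 0, 0]"

definition sfun :: "real \<Rightarrow> real^4 \<Rightarrow> real^4 \<Rightarrow> real^4" where
  "sfun lam q qd = qd + lam *\<^sub>R (q$1 *\<^sub>R q - one4)"

text \<open>Closed-loop torque; qd$1 is the time derivative of the scalar part q0.\<close>
definition tau_cl :: "real^3^3 \<Rightarrow> real \<Rightarrow> real \<Rightarrow> real^4^4 \<Rightarrow> real^4 \<Rightarrow> real^4 \<Rightarrow> real^4" where
  "tau_cl M m0 lam Kr q qd =
     - lam *\<^sub>R (Dm M m0 q *v (q$1 *\<^sub>R qd + qd$1 *\<^sub>R q) + Cm M m0 q qd *v (q$1 *\<^sub>R q - one4))
     - Kr *v sfun lam q qd"

definition closed_loop_solution ::
  "real^3^3 \<Rightarrow> real \<Rightarrow> real \<Rightarrow> real^4^4 \<Rightarrow> real \<Rightarrow> (real \<Rightarrow> real^4) \<Rightarrow> (real \<Rightarrow> real^4) \<Rightarrow> (real \<Rightarrow> real^4) \<Rightarrow> bool" where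
  "closed_loop_solution M m0 lam Kr t0 q qd qdd \<longleftrightarrow>
     (\<forall>t\<ge>t0. norm (q t) = 1
        \<and> (q has_vector_derivative qd t) (at t within {t0..})
        \<and> (qd has_vector_derivative qdd t) (at t within {t0..})
        \<and> Dm M m0 (q t) *v qdd t + Cm M m0 (q t) (qd t) *v qd t = tau_cl M m0 lam Kr (q t) (qd t))"

end

theory Submission
  imports Defs
begin

text \<open>The Lyapunov function is \<open>V = s\<^sup>T D(q) s\<close>. For a unit quaternion \<open>q\<close> one has
\<open>s\<^sup>T D(q) s = m\<^sub>0 (q\<^sup>T s)\<^sup>2 + (J\<^sup>T s)\<^sup>T M (J\<^sup>T s)\<close> and \<open>(q\<^sup>T s)\<^sup>2 + |J\<^sup>T s|\<^sup>2 = |s|\<^sup>2\<close>, so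
\<open>V\<close> is comparable to \<open>|s|\<^sup>2\<close> as soon as \<open>m\<^sub>0 > 0\<close>, which follows from \<open>m\<^sub>0 \<ge> \<lambda>\<^sub>m\<^sub>i\<^sub>n(M) > 0\<close>.
The torque is chosen so that the closed loop reads \<open>D s' + C s = -K\<^sub>r s\<close>. Along motions on the
sphere (\<open>q\<^sup>T q' = 0\<close>) the gyroscopic term \<open>(M\<omega>)\<^sup>\<and>\<close> drops out of \<open>s\<^sup>T C s\<close> and
\<open>s\<^sup>T D' s = 2 s\<^sup>T C s\<close>, hence \<open>V' = 2 s\<^sup>T (D s' + C s) = -2 s\<^sup>T K\<^sub>r s \<le> -\<alpha> V\<close>.
So \<open>V\<close>, and with it \<open>|s|\<close>, decays exponentially.\<close>

section \<open>Quadratic forms and eigenvalues\<close>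

lemma inner_mult_transpose: "(x::real^'n) \<bullet> (A *v y) = (transpose A *v x) \<bullet> y"
  by (simp add: dot_lmul_matrix)

lemma symmetric_inner_mult_commute: "transpose A = A \<Longrightarrow> (x::real^'n) \<bullet> (A *v y) = y \<bullet> (A *v x)"
  by (metis inner_mult_transpose inner_commute)

lemma uminus_matrix_vector_mult: "(- A) *v (x::real^'n) = - (A *v x)"
  by (simp add: vec_eq_iff matrix_vector_mult_def sum_negf)

lemma quadratic_form_min_on_sphere:
  fixes A :: "real^'n^'n"
  obtains v where "norm v = 1" and "\<And>x. (v \<bullet> (A *v v)) * (x \<bullet> x) \<le> x \<bullet> (A *v x)"
proof -
  let ?S = "sphere (0::real^'n) 1"
  let ?f = "\<lambda>x. x \<bullet> (A *v x)"
  have "continuous_on ?S ?f"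
    by (intro continuous_intros bounded_linear.continuous_on[OF matrix_vector_mul_bounded_linear])
  then obtain v where v: "v \<in> ?S" "\<And>y. y \<in> ?S \<Longrightarrow> ?f v \<le> ?f y"
    using continuous_attains_inf[of ?S ?f] by auto
  have "?f v * (x \<bullet> x) \<le> ?f x" for x
  proof (cases "x = 0")
    case False
    have "?f v \<le> ?f (inverse (norm x) *\<^sub>R x)" using False by (intro v) simp
    also have "\<dots> = ?f x / (norm x)\<^sup>2"
      by (simp add: matrix_vector_mult_scaleR power2_eq_square field_simps)
    finally show ?thesis using False by (simp add: field_simps power2_norm_eq_inner)
  qed simp
  with v(1) show thesis by (intro that) auto
qed

lemma pos_def_mat_lower_bound:
  fixes A :: "real^'n^'n"
  assumes "pos_def_mat A"
  obtains c where "c > 0" and "\<And>x. c * (x \<bullet> x) \<le> x \<bullet> (A *v x)"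
proof -
  obtain v where "norm v = 1" "\<And>x. (v \<bullet> (A *v v)) * (x \<bullet> x) \<le> x \<bullet> (A *v x)"
    using quadratic_form_min_on_sphere[of A] by blast
  moreover from \<open>norm v = 1\<close> have "v \<noteq> 0" by auto
  with assms have "v \<bullet> (A *v v) > 0" unfolding pos_def_mat_def by blast
  ultimately show thesis by (intro that) auto
qed

lemma quadratic_form_upper_bound:
  fixes A :: "real^'n^'n"
  obtains K where "\<And>x. x \<bullet> (A *v x) \<le> K * (x \<bullet> x)"
proof -
  obtain K where K: "\<And>x. norm (A *v x) \<le> norm x * K"
    using bounded_linear.bounded[OF matrix_vector_mul_bounded_linear[of A]] by blast
  have "x \<bullet> (A *v x) \<le> K * (x \<bullet> x)" for x
  proof -
    have "x \<bullet> (A *v x) \<le> norm x * norm (A *v x)" by (rule norm_cauchy_schwarz)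
    also have "\<dots> \<le> norm x * (norm x * K)" by (rule mult_left_mono[OF K norm_ge_zero])
    also have "\<dots> = K * (x \<bullet> x)" by (simp add: power2_norm_eq_inner[symmetric] power2_eq_square)
    finally show ?thesis .
  qed
  then show thesis by (rule that)
qed

lemma linear_coeff_eq_0_if_quadratic_nonneg:
  fixes b c :: real
  assumes "\<And>t. 0 \<le> b * t + c * t\<^sup>2"
  shows "b = 0"
proof (rule ccontr)
  assume "b \<noteq> 0"
  define d where "d = \<bar>c\<bar> + 1"
  have "d > 0" "c < d" by (auto simp: d_def)
  have "b * (- b / d) + c * (- b / d)\<^sup>2 = - (b\<^sup>2 / d) * (1 - c / d)"
    using \<open>d > 0\<close> by (simp add: field_simps power2_eq_square)
  also have "\<dots> < 0"
    using \<open>b \<noteq> 0\<close> \<open>d > 0\<close> \<open>c < d\<close> by (intro mult_neg_pos) auto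
  finally show False using assms[of "- b / d"] by linarith
qed

text \<open>Perturbing \<open>v\<close> in the direction of the residual \<open>w = A v - \<mu> v\<close> changes
\<open>x \<bullet> A x - \<mu> |x|\<^sup>2\<close> by \<open>2t|w|\<^sup>2 + O(t\<^sup>2)\<close>.\<close>

lemma rayleigh_minimizer_eigenvector:
  fixes A :: "real^'n^'n"
  assumes A: "transpose A = A" and low: "\<And>x. \<mu> * (x \<bullet> x) \<le> x \<bullet> (A *v x)"
    and v: "v \<bullet> (A *v v) = \<mu> * (v \<bullet> v)"
  shows "A *v v = \<mu> *\<^sub>R v"
proof -
  define w where "w = A *v v - \<mu> *\<^sub>R v"
  have "w \<bullet> (A *v v) - \<mu> * (w \<bullet> v) = w \<bullet> w"
    by (simp add: w_def inner_diff_right)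
  moreover have "v \<bullet> (A *v w) = w \<bullet> (A *v v)"
    by (rule symmetric_inner_mult_commute[OF A])
  ultimately have "0 \<le> 2 * (w \<bullet> w) * t + (w \<bullet> (A *v w) - \<mu> * (w \<bullet> w)) * t\<^sup>2" for t
    using low[of "v + t *\<^sub>R w"] v
    by (simp add: matrix_vector_right_distrib matrix_vector_mult_scaleR inner_add_left inner_add_right
        inner_commute[of w v] power2_eq_square algebra_simps del: transpose_matrix_vector)
  then have "2 * (w \<bullet> w) = 0" by (rule linear_coeff_eq_0_if_quadratic_nonneg)
  then show ?thesis by (simp add: w_def)
qed

lemma eigvals_nonempty:
  fixes A :: "real^'n^'n"
  assumes "transpose A = A"
  shows "eigvals A \<noteq> {}"
proof -
  obtain v where v: "norm v = 1" "\<And>x. (v \<bullet> (A *v v)) * (x \<bullet> x) \<le> x \<bullet> (A *v x)"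
    using quadratic_form_min_on_sphere[of A] by blast
  then have "A *v v = (v \<bullet> (A *v v)) *\<^sub>R v"
    by (intro rayleigh_minimizer_eigenvector[OF assms]) (auto simp: dot_square_norm)
  moreover from v(1) have "v \<noteq> 0" by auto
  ultimately show ?thesis unfolding eigvals_def by blast
qed

text \<open>Eigenvectors of distinct eigenvalues of a symmetric matrix are orthogonal, hence independent.\<close>

lemma finite_eigvals:
  fixes A :: "real^'n^'n"
  assumes A: "transpose A = A"
  shows "finite (eigvals A)"
proof -
  define g where "g \<mu> = (SOME v. v \<noteq> 0 \<and> A *v v = \<mu> *\<^sub>R v)" for \<mu>
  have g: "g \<mu> \<noteq> 0" "A *v g \<mu> = \<mu> *\<^sub>R g \<mu>" if "\<mu> \<in> eigvals A" for \<mu>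
    using someI_ex[of "\<lambda>v. v \<noteq> 0 \<and> A *v v = \<mu> *\<^sub>R v"] that
    unfolding eigvals_def g_def by auto
  have "orthogonal (g a) (g b)" if ab: "a \<in> eigvals A" "b \<in> eigvals A" "a \<noteq> b" for a b
  proof -
    have "a * (g a \<bullet> g b) = g b \<bullet> (A *v g a)" using g(2)[OF ab(1)] by (simp add: inner_commute)
    also have "\<dots> = g a \<bullet> (A *v g b)" by (rule symmetric_inner_mult_commute[OF A])
    also have "\<dots> = b * (g a \<bullet> g b)" using g(2)[OF ab(2)] by simp
    finally show ?thesis using \<open>a \<noteq> b\<close> by (simp add: orthogonal_def)
  qed
  moreover have "inj_on g (eigvals A)"
  proof (rule inj_onI)
    fix a b assume ab: "a \<in> eigvals A" "b \<in> eigvals A" "g a = g b"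
    then have "a *\<^sub>R g a = b *\<^sub>R g a" using g(2) by metis
    then show "a = b" using g(1)[OF ab(1)] by simp
  qed
  ultimately have "pairwise orthogonal (g ` eigvals A)"
    unfolding pairwise_def by (auto simp: inj_on_def)
  moreover have "0 \<notin> g ` eigvals A" using g(1) by auto
  ultimately have "finite (g ` eigvals A)"
    using pairwise_orthogonal_independent independent_bound by blast
  then show ?thesis using \<open>inj_on g (eigvals A)\<close> finite_imageD by blast
qed

lemma lambda_min_pos:
  fixes A :: "real^'n^'n"
  assumes "pos_def_mat A"
  shows "lambda_min A > 0"
proof -
  have A: "transpose A = A" using assms unfolding pos_def_mat_def by simp
  have "lambda_min A \<in> eigvals A"
    unfolding lambda_min_def using finite_eigvals[OF A] eigvals_nonempty[OF A] by (rule Min_in)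
  then obtain v where "v \<noteq> 0" "A *v v = lambda_min A *\<^sub>R v" unfolding eigvals_def by blast
  moreover from \<open>v \<noteq> 0\<close> have "v \<bullet> (A *v v) > 0" using assms unfolding pos_def_mat_def by auto
  ultimately have "lambda_min A * (v \<bullet> v) > 0" by simp
  moreover have "v \<bullet> v > 0" using \<open>v \<noteq> 0\<close> by simp
  ultimately show ?thesis by (simp add: zero_less_mult_iff)
qed

section \<open>Decay estimates\<close>

lemma inner_derivative_eq_0_on_sphere:
  fixes q :: "real \<Rightarrow> 'a::real_inner"
  assumes sphere: "\<And>t. t \<ge> t0 \<Longrightarrow> norm (q t) = 1"
    and q: "(q has_vector_derivative q') (at x within {t0..})" and "x \<ge> t0"
  shows "q x \<bullet> q' = 0"
proof -
  have sub: "{x..x+1} \<subseteq> {t0..}" using \<open>x \<ge> t0\<close> by auto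
  have "((\<lambda>t. q t \<bullet> q t) has_vector_derivative q x \<bullet> q' + q' \<bullet> q x) (at x within {x..x+1})"
    by (rule has_vector_derivative_within_subset[OF
          bounded_bilinear.has_vector_derivative[OF bounded_bilinear_inner q q] sub])
  moreover have "((\<lambda>t. q t \<bullet> q t) has_vector_derivative 0) (at x within {x..x+1})"
  proof (rule has_vector_derivative_transform_within[OF has_vector_derivative_const[of 1]])
    show "\<And>y. y \<in> {x..x + 1} \<Longrightarrow> dist y x < 1 \<Longrightarrow> 1 = q y \<bullet> q y"
      using sphere \<open>x \<ge> t0\<close> by (auto simp: dot_square_norm)
  qed simp_all
  ultimately have "q x \<bullet> q' + q' \<bullet> q x = 0"
    using vector_derivative_unique_within_closed_interval[of x "x+1" x]
    by (simp add: cbox_interval)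
  then show ?thesis by (simp add: inner_commute)
qed

lemma exponential_decay_of_derivative_bound:
  fixes V :: "real \<Rightarrow> real"
  assumes deriv: "\<And>x. x \<ge> t0 \<Longrightarrow> (V has_real_derivative V' x) (at x within {t0..})"
    and bound: "\<And>x. x \<ge> t0 \<Longrightarrow> V' x \<le> - \<alpha> * V x" and "t \<ge> t0"
  shows "V t \<le> V t0 * exp (- \<alpha> * (t - t0))"
proof -
  define W where "W x = V x * exp (\<alpha> * (x - t0))" for x
  have W: "(W has_real_derivative (V' x + \<alpha> * V x) * exp (\<alpha> * (x - t0))) (at x within {t0..})"
    if "x \<ge> t0" for x
    unfolding W_def[abs_def] using deriv[OF that]
    by (auto intro!: derivative_eq_intros simp: algebra_simps)
  have "W t \<le> W t0"
  proof (rule DERIV_nonpos_imp_decreasing_open[OF \<open>t \<ge> t0\<close>])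
    fix x assume x: "t0 < x" "x < t"
    have "at x within {t0..} = at x" by (rule at_within_interior) (use x in simp)
    moreover have "(V' x + \<alpha> * V x) * exp (\<alpha> * (x - t0)) \<le> 0"
      using bound[of x] x by (simp add: mult_nonpos_nonneg)
    ultimately show "\<exists>y. (W has_real_derivative y) (at x) \<and> y \<le> 0"
      using W[of x] x by auto
  next
    have "continuous_on {t0..} W"
      unfolding continuous_on_eq_continuous_within using W DERIV_continuous by fastforce
    then show "continuous_on {t0..t} W" by (rule continuous_on_subset) auto
  qed
  then have "W t * exp (- \<alpha> * (t - t0)) \<le> W t0 * exp (- \<alpha> * (t - t0))"
    by (simp add: mult_right_mono)
  then show ?thesis
    unfolding W_def by (simp add: mult.assoc flip: exp_add)
qed

lemma sqrt_decay_of_square_decay: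
  fixes a b c1 c2 \<gamma> :: real
  assumes "c1 * a\<^sup>2 \<le> c2 * b\<^sup>2 * exp (- (2 * \<gamma>) * d)" and "c1 > 0" "c2 > 0" "a \<ge> 0" "b \<ge> 0"
  shows "a \<le> sqrt (c2 / c1) * b * exp (- \<gamma> * d)"
proof (rule power2_le_imp_le)
  have "a\<^sup>2 \<le> c2 / c1 * b\<^sup>2 * exp (- (2 * \<gamma>) * d)"
    using assms by (simp add: field_simps)
  also have "\<dots> = (sqrt (c2 / c1) * b * exp (- \<gamma> * d))\<^sup>2"
    using assms by (simp add: power_mult_distrib real_sqrt_pow2 power2_eq_square[of "exp _"]
        flip: exp_add)
  finally show "a\<^sup>2 \<le> (sqrt (c2 / c1) * b * exp (- \<gamma> * d))\<^sup>2" .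
qed (use assms in simp)

section \<open>Quaternion matrices\<close>

lemma vector_4_nth [simp]:
  "(vector [x, y, z, w] :: 'a::zero^4) $ 1 = x"
  "(vector [x, y, z, w] :: 'a::zero^4) $ 2 = y"
  "(vector [x, y, z, w] :: 'a::zero^4) $ 3 = z"
  "(vector [x, y, z, w] :: 'a::zero^4) $ 4 = w"
  unfolding vector_def by simp_all

lemma inner_real4: "(x::real^4) \<bullet> y = x$1*y$1 + x$2*y$2 + x$3*y$3 + x$4*y$4"
  by (simp add: inner_vec_def sum_4)

lemma inner_real3: "(x::real^3) \<bullet> y = x$1*y$1 + x$2*y$2 + x$3*y$3"
  by (simp add: inner_vec_def sum_3)

lemma transpose_Jm_mult:
  "transpose (Jm x) *v y =
     vector [- x$2*y$1 + x$1*y$2 + x$4*y$3 - x$3*y$4,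
             - x$3*y$1 - x$4*y$2 + x$1*y$3 + x$2*y$4,
             - x$4*y$1 + x$3*y$2 - x$2*y$3 + x$1*y$4]"
  unfolding vec_eq_iff forall_3
  by (simp add: Jm_def matrix_vector_mult_def transpose_def sum_4 vector_def[symmetric])

lemma bounded_bilinear_transpose_Jm: "bounded_bilinear (\<lambda>x y. transpose (Jm x) *v (y::real^4))"
  unfolding bilinear_conv_bounded_bilinear[symmetric] bilinear_def
proof (intro conjI allI)
  fix x :: "real^4"
  show "linear (\<lambda>y. transpose (Jm x) *v y)" by (rule matrix_vector_mul_linear)
next
  fix y :: "real^4"
  show "linear (\<lambda>x. transpose (Jm x) *v y)"
    by (rule linearI)
      (simp_all add: transpose_Jm_mult vec_eq_iff forall_3 algebra_simps del: transpose_matrix_vector)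
qed

lemma inner_sq_plus_transpose_Jm:
  "(q \<bullet> s)\<^sup>2 + (transpose (Jm q) *v s) \<bullet> (transpose (Jm q) *v s) = (q \<bullet> q) * (s \<bullet> s)"
  unfolding transpose_Jm_mult by (simp add: inner_real4 inner_real3) algebra

lemma inner_hat_self: "(y::real^3) \<bullet> (hat v *v y) = 0"
  by (simp add: hat_def inner_real3 matrix_vector_mult_def sum_3 algebra_simps)

lemma inner_Qm_transpose_Qm:
  "q \<bullet> (Qm p *v (transpose (Qm q) *v s)) = 2 * (q \<bullet> p) * (q \<bullet> s) - (q \<bullet> q) * (p \<bullet> s)"
  by (simp add: inner_real4 Qm_def matrix_vector_mult_def sum_4 transpose_def) algebra

lemma transpose_Jm_Qm_transpose_Qm:
  "transpose (Jm q) *v (Qm p *v (transpose (Qm q) *v s)) =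
     (2 * (q \<bullet> p)) *\<^sub>R (transpose (Jm q) *v s) - (q \<bullet> q) *\<^sub>R (transpose (Jm p) *v s)"
  unfolding transpose_Jm_mult vec_eq_iff forall_3
  by (simp add: inner_real4 Qm_def matrix_vector_mult_def sum_4 transpose_def) algebra

lemma outer_mult: "outer a b *v x = (b \<bullet> x) *\<^sub>R a"
  by (simp add: vec_eq_iff outer_def matrix_vector_mult_def inner_vec_def sum_distrib_left mult_ac)

section \<open>Inertia and Coriolis matrices\<close>

lemma inner_Dm:
  "s \<bullet> (Dm M m0 q *v x) =
     m0 * (q \<bullet> s) * (q \<bullet> x) + (transpose (Jm q) *v s) \<bullet> (M *v (transpose (Jm q) *v x))"
proof -
  have "s \<bullet> (Dm M m0 q *v x) =
      s \<bullet> (Jm q *v (M *v (transpose (Jm q) *v x))) + m0 * (s \<bullet> ((q \<bullet> x) *\<^sub>R q))"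
    unfolding Dm_def
    by (simp add: matrix_vector_mult_add_rdistrib scaleR_matrix_vector_assoc[symmetric] outer_mult
        matrix_vector_mul_assoc matrix_mul_assoc inner_add_right del: transpose_matrix_vector)
  then show ?thesis
    by (simp only: inner_mult_transpose[of s "Jm q"]) (simp add: inner_commute del: transpose_matrix_vector)
qed

lemma inner_Dm_self:
  "s \<bullet> (Dm M m0 q *v s) =
     m0 * (q \<bullet> s)\<^sup>2 + (transpose (Jm q) *v s) \<bullet> (M *v (transpose (Jm q) *v s))"
  by (simp add: inner_Dm power2_eq_square mult.assoc del: transpose_matrix_vector)

lemma inner_Cm_self:
  "s \<bullet> (Cm M m0 q p *v s) = - (s \<bullet> (Dm M m0 q *v (Qm p *v (transpose (Qm q) *v s))))"
proof -
  have "s \<bullet> (Jm q *v (hat (M *v omega q p) *v (transpose (Jm q) *v s))) = 0"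
    by (simp only: inner_mult_transpose[of s] inner_hat_self)
  then show ?thesis
    unfolding Cm_def
    by (simp add: matrix_vector_mult_diff_rdistrib matrix_vector_mul_assoc matrix_mul_assoc
        inner_diff_right uminus_matrix_vector_mult del: transpose_matrix_vector)
qed

lemma inner_Cm_self_sphere:
  assumes "q \<bullet> q = 1" and "q \<bullet> p = 0"
  shows "s \<bullet> (Cm M m0 q p *v s) =
           m0 * (q \<bullet> s) * (p \<bullet> s) + (transpose (Jm q) *v s) \<bullet> (M *v (transpose (Jm p) *v s))"
  unfolding inner_Cm_self inner_Dm inner_Qm_transpose_Qm transpose_Jm_Qm_transpose_Qm assms
    matrix_vector_mult_diff_distrib matrix_vector_mult_scaleR
  by (simp add: inner_diff_right inner_commute del: transpose_matrix_vector)

lemma inner_Dm_self_bounds: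
  assumes "q \<bullet> q = 1"
    and low: "\<And>x. c * (x \<bullet> x) \<le> x \<bullet> (M *v x)" and up: "\<And>x. x \<bullet> (M *v x) \<le> K * (x \<bullet> x)"
  shows "min m0 c * (s \<bullet> s) \<le> s \<bullet> (Dm M m0 q *v s)"
    and "s \<bullet> (Dm M m0 q *v s) \<le> max m0 K * (s \<bullet> s)"
proof -
  let ?u = "transpose (Jm q) *v s"
  note form = inner_Dm_self[of s M m0 q]
  have split: "s \<bullet> s = (q \<bullet> s)\<^sup>2 + ?u \<bullet> ?u"
    using inner_sq_plus_transpose_Jm[of q s] assms(1) by simp
  have nonneg: "0 \<le> (q \<bullet> s)\<^sup>2" "0 \<le> ?u \<bullet> ?u" by simp_all
  have "min m0 c * (s \<bullet> s) = min m0 c * (q \<bullet> s)\<^sup>2 + min m0 c * (?u \<bullet> ?u)"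
    by (simp only: split ring_distribs)
  also have "\<dots> \<le> m0 * (q \<bullet> s)\<^sup>2 + c * (?u \<bullet> ?u)"
    by (intro add_mono mult_right_mono nonneg) auto
  also have "\<dots> \<le> s \<bullet> (Dm M m0 q *v s)" using low[of ?u] form by simp
  finally show "min m0 c * (s \<bullet> s) \<le> s \<bullet> (Dm M m0 q *v s)" .
  have "s \<bullet> (Dm M m0 q *v s) \<le> m0 * (q \<bullet> s)\<^sup>2 + K * (?u \<bullet> ?u)" using up[of ?u] form by simp
  also have "\<dots> \<le> max m0 K * (q \<bullet> s)\<^sup>2 + max m0 K * (?u \<bullet> ?u)"
    by (intro add_mono mult_right_mono nonneg) auto
  also have "\<dots> = max m0 K * (s \<bullet> s)" by (simp only: split ring_distribs)
  finally show "s \<bullet> (Dm M m0 q *v s) \<le> max m0 K * (s \<bullet> s)" .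
qed

lemma has_real_derivative_inner_Dm_self:
  fixes q s :: "real \<Rightarrow> real^4"
  assumes M: "transpose M = M" and "q x \<bullet> q x = 1" and "q x \<bullet> q' = 0"
    and q: "(q has_vector_derivative q') (at x within T)"
    and s: "(s has_vector_derivative s') (at x within T)"
  shows "((\<lambda>t. s t \<bullet> (Dm M m0 (q t) *v s t)) has_real_derivative
            2 * (s x \<bullet> (Dm M m0 (q x) *v s' + Cm M m0 (q x) q' *v s x))) (at x within T)"
proof -
  let ?u = "\<lambda>t. transpose (Jm (q t)) *v s t"
  let ?u' = "transpose (Jm (q x)) *v s' + transpose (Jm q') *v s x"
  note form = inner_Dm_self[abs_def]
  have qs: "((\<lambda>t. q t \<bullet> s t) has_real_derivative (q x \<bullet> s' + q' \<bullet> s x)) (at x within T)"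
    unfolding has_real_derivative_iff_has_vector_derivative
    by (rule bounded_bilinear.has_vector_derivative[OF bounded_bilinear_inner q s])
  have u: "(?u has_vector_derivative ?u') (at x within T)"
    by (rule bounded_bilinear.has_vector_derivative[OF bounded_bilinear_transpose_Jm q s])
  have Mu: "((\<lambda>t. M *v ?u t) has_vector_derivative M *v ?u') (at x within T)"
    by (rule bounded_linear.has_vector_derivative[OF matrix_vector_mul_bounded_linear u])
  have uMu: "((\<lambda>t. ?u t \<bullet> (M *v ?u t)) has_real_derivative ?u x \<bullet> (M *v ?u') + ?u' \<bullet> (M *v ?u x))
      (at x within T)"
    unfolding has_real_derivative_iff_has_vector_derivative
    by (rule bounded_bilinear.has_vector_derivative[OF bounded_bilinear_inner u Mu])
  have "((\<lambda>t. s t \<bullet> (Dm M m0 (q t) *v s t)) has_real_derivative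
      m0 * (2 * (q x \<bullet> s x) * (q x \<bullet> s' + q' \<bullet> s x)) + (?u x \<bullet> (M *v ?u') + ?u' \<bullet> (M *v ?u x)))
      (at x within T)"
    unfolding form using DERIV_power[OF qs, of 2]
    by (intro DERIV_add DERIV_cmult uMu) (simp add: algebra_simps)
  moreover have "?u' \<bullet> (M *v ?u x) = ?u x \<bullet> (M *v ?u')"
    by (rule symmetric_inner_mult_commute[OF M])
  then have "m0 * (2 * (q x \<bullet> s x) * (q x \<bullet> s' + q' \<bullet> s x)) + (?u x \<bullet> (M *v ?u') + ?u' \<bullet> (M *v ?u x))
      = 2 * (s x \<bullet> (Dm M m0 (q x) *v s' + Cm M m0 (q x) q' *v s x))"
    unfolding inner_add_right inner_Dm inner_Cm_self_sphere[OF assms(2,3)]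
    by (simp add: matrix_vector_right_distrib inner_add_right algebra_simps del: transpose_matrix_vector)
  ultimately show ?thesis by simp
qed

section \<open>The closed loop\<close>

lemma closed_loop_sliding_dynamics:
  assumes "Dm M m0 q *v qdd + Cm M m0 q qd *v qd = tau_cl M m0 lam Kr q qd"
  shows "Dm M m0 q *v (qdd + lam *\<^sub>R (q$1 *\<^sub>R qd + qd$1 *\<^sub>R q)) + Cm M m0 q qd *v sfun lam q qd
           = - (Kr *v sfun lam q qd)"
  using assms unfolding tau_cl_def sfun_def
  by (simp add: matrix_vector_right_distrib matrix_vector_mult_scaleR
      matrix_vector_mult_diff_distrib algebra_simps)

lemma has_vector_derivative_sfun:
  assumes q: "(q has_vector_derivative q') (at x within T)"
    and qd: "(qd has_vector_derivative qdd) (at x within T)"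
  shows "((\<lambda>t. sfun lam (q t) (qd t)) has_vector_derivative
            qdd + lam *\<^sub>R (q x $ 1 *\<^sub>R q' + q' $ 1 *\<^sub>R q x)) (at x within T)"
proof -
  have "((\<lambda>t. q t $ 1) has_real_derivative q' $ 1) (at x within T)"
    unfolding has_real_derivative_iff_has_vector_derivative
    by (rule bounded_linear.has_vector_derivative[OF bounded_linear_vec_nth q])
  then have "((\<lambda>t. q t $ 1 *\<^sub>R q t - one4) has_vector_derivative q x $ 1 *\<^sub>R q' + q' $ 1 *\<^sub>R q x)
      (at x within T)"
    using has_vector_derivative_diff[OF has_vector_derivative_scaleR[OF _ q]
        has_vector_derivative_const[of one4]] by simp
  then show ?thesis
    unfolding sfun_def
    by (intro has_vector_derivative_add qd bounded_linear.has_vector_derivative[OF bounded_linear_scaleR_right])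
qed

lemma closed_loop_energy_decay:
  fixes M :: "real^3^3" and q qd qdd :: "real \<Rightarrow> real^4" and lam :: real
  defines "s \<equiv> \<lambda>t. sfun lam (q t) (qd t)"
  assumes M: "transpose M = M"
    and Kr: "\<And>x. \<kappa> * (x \<bullet> x) \<le> x \<bullet> (Kr *v x)" and "\<kappa> \<ge> 0"
    and D: "\<And>q s. q \<bullet> q = 1 \<Longrightarrow> s \<bullet> (Dm M m0 q *v s) \<le> c * (s \<bullet> s)" and "c > 0"
    and sol: "closed_loop_solution M m0 lam Kr t0 q qd qdd" and "t \<ge> t0"
  shows "s t \<bullet> (Dm M m0 (q t) *v s t) \<le> s t0 \<bullet> (Dm M m0 (q t0) *v s t0) * exp (- (2 * \<kappa> / c) * (t - t0))"
proof (rule exponential_decay_of_derivative_bound[OF _ _ \<open>t \<ge> t0\<close>])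
  fix x assume x: "x \<ge> t0"
  have sphere: "\<And>t. t \<ge> t0 \<Longrightarrow> norm (q t) = 1"
    and q: "(q has_vector_derivative qd x) (at x within {t0..})"
    and qd: "(qd has_vector_derivative qdd x) (at x within {t0..})"
    and eq: "Dm M m0 (q x) *v qdd x + Cm M m0 (q x) (qd x) *v qd x = tau_cl M m0 lam Kr (q x) (qd x)"
    using sol x unfolding closed_loop_solution_def by auto
  have qq: "q x \<bullet> q x = 1" using sphere[OF x] by (simp add: dot_square_norm)
  have "q x \<bullet> qd x = 0" by (rule inner_derivative_eq_0_on_sphere[OF sphere q x])
  from has_real_derivative_inner_Dm_self[OF M qq this q has_vector_derivative_sfun[OF q qd]]
  have "((\<lambda>t. s t \<bullet> (Dm M m0 (q t) *v s t)) has_real_derivative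
      2 * (s x \<bullet> (Dm M m0 (q x) *v (qdd x + lam *\<^sub>R (q x $ 1 *\<^sub>R qd x + qd x $ 1 *\<^sub>R q x))
              + Cm M m0 (q x) (qd x) *v s x))) (at x within {t0..})"
    unfolding s_def .
  then show "((\<lambda>t. s t \<bullet> (Dm M m0 (q t) *v s t)) has_real_derivative - 2 * (s x \<bullet> (Kr *v s x)))
      (at x within {t0..})"
    unfolding s_def closed_loop_sliding_dynamics[OF eq] by simp
  have "- 2 * (s x \<bullet> (Kr *v s x)) \<le> - 2 * \<kappa> * (s x \<bullet> s x)" using Kr[of "s x"] by simp
  also have "\<dots> \<le> - (2 * \<kappa> / c) * (s x \<bullet> (Dm M m0 (q x) *v s x))"
    using mult_left_mono[OF D[OF qq, of "s x"], of "2 * \<kappa> / c"] \<open>c > 0\<close> \<open>\<kappa> \<ge> 0\<close> by simp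
  finally show "- 2 * (s x \<bullet> (Kr *v s x)) \<le> - (2 * \<kappa> / c) * (s x \<bullet> (Dm M m0 (q x) *v s x))" .
qed

lemma closed_loop_sliding_decay:
  fixes M :: "real^3^3" and q qd qdd :: "real \<Rightarrow> real^4" and lam :: real
  assumes M: "transpose M = M"
    and Kr: "\<And>x. \<kappa> * (x \<bullet> x) \<le> x \<bullet> (Kr *v x)" and "\<kappa> \<ge> 0"
    and D_low: "\<And>q s. q \<bullet> q = 1 \<Longrightarrow> c1 * (s \<bullet> s) \<le> s \<bullet> (Dm M m0 q *v s)" and "c1 > 0"
    and D_up: "\<And>q s. q \<bullet> q = 1 \<Longrightarrow> s \<bullet> (Dm M m0 q *v s) \<le> c2 * (s \<bullet> s)" and "c2 > 0"
    and sol: "closed_loop_solution M m0 lam Kr t0 q qd qdd" and "t \<ge> t0"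
  shows "norm (sfun lam (q t) (qd t)) \<le>
           sqrt (c2 / c1) * norm (sfun lam (q t0) (qd t0)) * exp (- (\<kappa> / c2) * (t - t0))"
proof (rule sqrt_decay_of_square_decay)
  let ?s = "\<lambda>t. sfun lam (q t) (qd t)"
  have "q t \<bullet> q t = 1" "q t0 \<bullet> q t0 = 1"
    using sol \<open>t \<ge> t0\<close> unfolding closed_loop_solution_def by (auto simp: dot_square_norm)
  then have "c1 * (norm (?s t))\<^sup>2 \<le> ?s t \<bullet> (Dm M m0 (q t) *v ?s t)"
    using D_low by (simp add: power2_norm_eq_inner)
  also have "\<dots> \<le> ?s t0 \<bullet> (Dm M m0 (q t0) *v ?s t0) * exp (- (2 * \<kappa> / c2) * (t - t0))"
    using closed_loop_energy_decay[OF M Kr _ D_up \<open>c2 > 0\<close> sol \<open>t \<ge> t0\<close>] \<open>\<kappa> \<ge> 0\<close> by simp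
  also have "\<dots> \<le> c2 * (norm (?s t0))\<^sup>2 * exp (- (2 * \<kappa> / c2) * (t - t0))"
    using D_up[OF \<open>q t0 \<bullet> q t0 = 1\<close>] by (simp add: power2_norm_eq_inner)
  finally show "c1 * (norm (?s t))\<^sup>2 \<le> c2 * (norm (?s t0))\<^sup>2 * exp (- (2 * (\<kappa> / c2)) * (t - t0))"
    by simp
qed (use \<open>c1 > 0\<close> \<open>c2 > 0\<close> in auto)

theorem lemma6:
  fixes M :: "real^3^3" and Kr :: "real^4^4" and m0 lam :: real
  assumes "pos_def_mat M"
    and "lambda_min M \<le> m0" and "m0 \<le> lambda_max M"
    and "lam > 0"
    and "pos_def_mat Kr"
  shows "\<exists>k \<gamma>. k > 0 \<and> \<gamma> > 0 \<and>
     (\<forall>t0 q qd qdd. closed_loop_solution M m0 lam Kr t0 q qd qdd \<longrightarrow>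
        (\<forall>t\<ge>t0. norm (sfun lam (q t) (qd t))
                  \<le> k * norm (sfun lam (q t0) (qd t0)) * exp (- \<gamma> * (t - t0))))"
proof -
  have M: "transpose M = M" using assms(1) unfolding pos_def_mat_def by simp
  obtain cM where "cM > 0" and cM: "\<And>x. cM * (x \<bullet> x) \<le> x \<bullet> (M *v x)"
    using pos_def_mat_lower_bound[OF assms(1)] by blast
  obtain KM where KM: "\<And>x. x \<bullet> (M *v x) \<le> KM * (x \<bullet> x)"
    using quadratic_form_upper_bound[of M] by blast
  obtain \<kappa> where "\<kappa> > 0" and Kr: "\<And>x. \<kappa> * (x \<bullet> x) \<le> x \<bullet> (Kr *v x)"
    using pos_def_mat_lower_bound[OF assms(5)] by blast
  have "m0 > 0" using lambda_min_pos[OF assms(1)] assms(2) by linarith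
  define c1 c2 where "c1 = min m0 cM" and "c2 = max m0 KM"
  have "c1 > 0" "c2 > 0" using \<open>m0 > 0\<close> \<open>cM > 0\<close> by (auto simp: c1_def c2_def)
  have D_low: "\<And>q s. q \<bullet> q = 1 \<Longrightarrow> c1 * (s \<bullet> s) \<le> s \<bullet> (Dm M m0 q *v s)"
    and D_up: "\<And>q s. q \<bullet> q = 1 \<Longrightarrow> s \<bullet> (Dm M m0 q *v s) \<le> c2 * (s \<bullet> s)"
    using inner_Dm_self_bounds[OF _ cM KM] unfolding c1_def c2_def by blast+
  show ?thesis
    using closed_loop_sliding_decay[OF M Kr _ D_low _ D_up] \<open>\<kappa> > 0\<close> \<open>c1 > 0\<close> \<open>c2 > 0\<close>
    by (intro exI[of _ "sqrt (c2 / c1)"] exI[of _ "\<kappa> / c2"]) auto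
qed

end
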